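(* Let $G$ be a group and let $(t_1,\ldots,t_n)\in G^n$ be an $n$-tuple such that $t_{i+1}=t_i^{-1}$ for some $i$. Let $H$ be the subgroup of $G$ generated by $t_1,\ldots,t_{i-1},t_{i+2},\ldots,t_n$. Then for every $h\in H$ the $n$-tuple $(t_1,\ldots,t_{i-1},ht_ih^{-1},ht_{i+1}h^{-1},t_{i+2},\ldots,t_n)$ is braid-equivalent to $(t_1,\ldots,t_n)$.
   Context: An elementary transformation (braid move) of an $n$-tuple $(t_1,\ldots,t_n)\in G^n$ is, for some $1\leq i\leq n-1$, either the replacement of $(t_i,t_{i+1})$ by $(t_it_{i+1}t_i^{-1},t_i)$ or by $(t_{i+1},t_{i+1}^{-1}t_it_{i+1})$, leaving the other entries unchanged. Two $n$-tuples are braid-equivalent if one is obtained from the other by a finite sequence of elementary transformations. *)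

theory Defs
  imports "HOL-Algebra.Algebra"
begin

text \<open>Tuples in G^n are lists of length n with entries in the carrier; positions are 0-based.\<close>

definition braid_move :: "('a, 'b) monoid_scheme \<Rightarrow> 'a list \<Rightarrow> 'a list \<Rightarrow> bool" where
  "braid_move G ts us \<longleftrightarrow> (\<exists>k. Suc k < length ts \<and>
     (us = ts[k := ts!k \<otimes>\<^bsub>G\<^esub> ts!(Suc k) \<otimes>\<^bsub>G\<^esub> inv\<^bsub>G\<^esub> (ts!k), Suc k := ts!k]
      \<or> us = ts[k := ts!(Suc k), Suc k := inv\<^bsub>G\<^esub> (ts!(Suc k)) \<otimes>\<^bsub>G\<^esub> ts!k \<otimes>\<^bsub>G\<^esub> ts!(Suc k)]))"

definition braid_equiv :: "('a, 'b) monoid_scheme \<Rightarrow> 'a list \<Rightarrow> 'a list \<Rightarrow> bool" where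
  "braid_equiv G = (braid_move G)\<^sup>*\<^sup>*"

end

theory Submission
  imports Defs
begin

text \<open>A cancelling pair \<open>(x, x\<inverse>)\<close> can pass any neighbour \<open>y\<close> in two ways: by two moves of the
first kind it passes \<open>y\<close> unchanged, by two moves of the second kind it passes \<open>y\<close> and gets
conjugated by \<open>y\<inverse>\<close>. Hence the pair can be carried next to any other entry \<open>y\<close> of the tuple,
conjugated by \<open>y\<close> there, and carried back. Since braid equivalence is symmetric on tuples
over \<open>G\<close>, the elements \<open>h\<close> for which conjugating the pair by \<open>h\<close> is a braid equivalence
form a subgroup; it contains the other entries and therefore the subgroup they generate.\<close>

lemma id_take_nth_nth_drop:
  "Suc k < length xs \<Longrightarrow> xs = take k xs @ [xs ! k, xs ! Suc k] @ drop (Suc (Suc k)) xs"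
  by (simp add: Cons_nth_drop_Suc)

lemma braid_move_iff:
  "braid_move G ts us \<longleftrightarrow> (\<exists>A a b R. ts = A @ [a, b] @ R \<and>
     (us = A @ [a \<otimes>\<^bsub>G\<^esub> b \<otimes>\<^bsub>G\<^esub> inv\<^bsub>G\<^esub> a, a] @ R \<or> us = A @ [b, inv\<^bsub>G\<^esub> b \<otimes>\<^bsub>G\<^esub> a \<otimes>\<^bsub>G\<^esub> b] @ R))"
  (is "_ \<longleftrightarrow> ?split")
proof
  assume "braid_move G ts us"
  then obtain k where k: "Suc k < length ts"
    and us: "us = ts[k := ts!k \<otimes>\<^bsub>G\<^esub> ts!(Suc k) \<otimes>\<^bsub>G\<^esub> inv\<^bsub>G\<^esub> (ts!k), Suc k := ts!k]
      \<or> us = ts[k := ts!(Suc k), Suc k := inv\<^bsub>G\<^esub> (ts!(Suc k)) \<otimes>\<^bsub>G\<^esub> ts!k \<otimes>\<^bsub>G\<^esub> ts!(Suc k)]"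
    unfolding braid_move_def by blast
  note ts = id_take_nth_nth_drop[OF k]
  have "ts[k := x, Suc k := y] = take k ts @ [x, y] @ drop (Suc (Suc k)) ts" for x y
    by (subst ts) (use k in \<open>simp add: list_update_append\<close>)
  with ts us show ?split
    by metis
next
  assume ?split
  then obtain A a b R where "ts = A @ [a, b] @ R"
    and "us = A @ [a \<otimes>\<^bsub>G\<^esub> b \<otimes>\<^bsub>G\<^esub> inv\<^bsub>G\<^esub> a, a] @ R \<or> us = A @ [b, inv\<^bsub>G\<^esub> b \<otimes>\<^bsub>G\<^esub> a \<otimes>\<^bsub>G\<^esub> b] @ R"
    by blast
  then show "braid_move G ts us"
    unfolding braid_move_def
    by (intro exI[of _ "length A"]) (auto simp: list_update_append nth_append)
qed

lemma braid_move_conj_left: "braid_move G (A @ [a, b] @ R) (A @ [a \<otimes>\<^bsub>G\<^esub> b \<otimes>\<^bsub>G\<^esub> inv\<^bsub>G\<^esub> a, a] @ R)"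
  unfolding braid_move_iff by blast

lemma braid_move_conj_right: "braid_move G (A @ [a, b] @ R) (A @ [b, inv\<^bsub>G\<^esub> b \<otimes>\<^bsub>G\<^esub> a \<otimes>\<^bsub>G\<^esub> b] @ R)"
  unfolding braid_move_iff by blast

lemma braid_move_append:
  assumes "braid_move G ts us"
  shows "braid_move G (A @ ts @ R) (A @ us @ R)"
  using assms unfolding braid_move_iff by (metis append.assoc)

lemma braid_equiv_append:
  assumes "braid_equiv G ts us"
  shows "braid_equiv G (A @ ts @ R) (A @ us @ R)"
  using assms unfolding braid_equiv_def
  by (induction rule: rtranclp_induct) (auto intro: rtranclp.rtrancl_into_rtrancl braid_move_append)

lemma braid_move_imp_equiv: "braid_move G ts us \<Longrightarrow> braid_equiv G ts us"
  unfolding braid_equiv_def by (rule r_into_rtranclp)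

lemma braid_equiv_conj_left: "braid_equiv G (A @ [a, b] @ R) (A @ [a \<otimes>\<^bsub>G\<^esub> b \<otimes>\<^bsub>G\<^esub> inv\<^bsub>G\<^esub> a, a] @ R)"
  by (rule braid_move_imp_equiv, rule braid_move_conj_left)

lemma braid_equiv_conj_right: "braid_equiv G (A @ [a, b] @ R) (A @ [b, inv\<^bsub>G\<^esub> b \<otimes>\<^bsub>G\<^esub> a \<otimes>\<^bsub>G\<^esub> b] @ R)"
  by (rule braid_move_imp_equiv, rule braid_move_conj_right)

lemma braid_equiv_trans [trans]:
  "braid_equiv G ts us \<Longrightarrow> braid_equiv G us vs \<Longrightarrow> braid_equiv G ts vs"
  unfolding braid_equiv_def by (rule rtranclp_trans)

context group
begin

lemma inv_mult_cancel_left [simp]: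
  "x \<in> carrier G \<Longrightarrow> y \<in> carrier G \<Longrightarrow> inv x \<otimes> (x \<otimes> y) = y"
  "x \<in> carrier G \<Longrightarrow> y \<in> carrier G \<Longrightarrow> x \<otimes> (inv x \<otimes> y) = y"
  by (simp_all add: m_assoc[symmetric])

lemma braid_move_sym_carrier:
  assumes "braid_move G ts us" "set ts \<subseteq> carrier G"
  shows "braid_move G us ts \<and> set us \<subseteq> carrier G"
proof -
  obtain A a b R where ts: "ts = A @ [a, b] @ R"
    and us: "us = A @ [a \<otimes> b \<otimes> inv a, a] @ R \<or> us = A @ [b, inv b \<otimes> a \<otimes> b] @ R"
    using assms(1) unfolding braid_move_iff by blast
  have ab: "a \<in> carrier G" "b \<in> carrier G" using assms(2) ts by auto
  from us show ?thesis
  proof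
    assume "us = A @ [a \<otimes> b \<otimes> inv a, a] @ R"
    moreover have "inv a \<otimes> (a \<otimes> b \<otimes> inv a) \<otimes> a = b" using ab by (simp add: m_assoc)
    ultimately show ?thesis
      using braid_move_conj_right[of G A "a \<otimes> b \<otimes> inv a" a R] ab assms(2) ts by auto
  next
    assume "us = A @ [b, inv b \<otimes> a \<otimes> b] @ R"
    moreover have "b \<otimes> (inv b \<otimes> a \<otimes> b) \<otimes> inv b = a" using ab by (simp add: m_assoc)
    ultimately show ?thesis
      using braid_move_conj_left[of G A b "inv b \<otimes> a \<otimes> b" R] ab assms(2) ts by auto
  qed
qed

lemma braid_equiv_sym:
  assumes "braid_equiv G ts us" "set ts \<subseteq> carrier G"
  shows "braid_equiv G us ts"
proof -
  have "braid_equiv G us ts \<and> set us \<subseteq> carrier G"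
    using assms unfolding braid_equiv_def
    by (induction rule: rtranclp_induct)
      (auto dest: braid_move_sym_carrier intro: converse_rtranclp_into_rtranclp)
  then show ?thesis ..
qed

lemma braid_equiv_pair_pass:
  assumes "x \<in> carrier G" "y \<in> carrier G"
  shows "braid_equiv G [x, inv x, y] [y, x, inv x]"
proof -
  have "braid_equiv G [x, inv x, y] [x, inv x \<otimes> y \<otimes> x, inv x]"
    using braid_equiv_conj_left[of G "[x]" "inv x" y "[]"] assms by simp
  also have "braid_equiv G \<dots> [y, x, inv x]"
    using braid_equiv_conj_left[of G "[]" x "inv x \<otimes> y \<otimes> x" "[inv x]"] assms by (simp add: m_assoc)
  finally show ?thesis .
qed

lemma braid_equiv_pair_pass_conj:
  assumes "x \<in> carrier G" "y \<in> carrier G"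
  shows "braid_equiv G [x, inv x, y] [y, inv y \<otimes> x \<otimes> y, inv (inv y \<otimes> x \<otimes> y)]"
proof -
  have "braid_equiv G [x, inv x, y] [x, y, inv y \<otimes> inv x \<otimes> y]"
    using braid_equiv_conj_right[of G "[x]" "inv x" y "[]"] assms by simp
  also have "braid_equiv G \<dots> [y, inv y \<otimes> x \<otimes> y, inv (inv y \<otimes> x \<otimes> y)]"
    using braid_equiv_conj_right[of G "[]" x y "[inv y \<otimes> inv x \<otimes> y]"] assms
    by (simp add: m_assoc inv_mult_group)
  finally show ?thesis .
qed

lemma braid_equiv_pair_conj_adjacent:
  assumes "y \<in> carrier G" "u \<in> carrier G"
  shows "braid_equiv G [y, y \<otimes> u \<otimes> inv y, inv (y \<otimes> u \<otimes> inv y)] [y, u, inv u]"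
proof -
  define v where "v = y \<otimes> u \<otimes> inv y"
  have v: "v \<in> carrier G" using assms by (simp add: v_def)
  have "braid_equiv G [y, v, inv v] [v, inv v, y]"
    by (rule braid_equiv_sym[OF braid_equiv_pair_pass]) (use assms v in auto)
  also have "braid_equiv G \<dots> [y, inv y \<otimes> v \<otimes> y, inv (inv y \<otimes> v \<otimes> y)]"
    by (rule braid_equiv_pair_pass_conj[OF v assms(1)])
  also have "inv y \<otimes> v \<otimes> y = u"
    using assms by (simp add: v_def m_assoc)
  finally show ?thesis by (simp add: v_def)
qed

lemma braid_equiv_pair_pass_list:
  assumes "x \<in> carrier G" "set B \<subseteq> carrier G"
  shows "braid_equiv G (x # inv x # B) (B @ [x, inv x])"
  using assms(2)
proof (induction B)
  case Nil
  show ?case by (simp add: braid_equiv_def)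
next
  case (Cons b B)
  then have b: "b \<in> carrier G" by simp
  have "braid_equiv G (x # inv x # b # B) (b # x # inv x # B)"
    using braid_equiv_append[OF braid_equiv_pair_pass[OF assms(1) b], of "[]" B] by simp
  also have "braid_equiv G \<dots> (b # B @ [x, inv x])"
    using braid_equiv_append[OF Cons.IH, of "[b]" "[]"] Cons.prems by simp
  finally show ?case by simp
qed

lemma braid_equiv_pair_relocate:
  assumes "x \<in> carrier G" "set (A @ B) \<subseteq> carrier G" "A @ B = A' @ B'"
  shows "braid_equiv G (A @ x # inv x # B) (A' @ x # inv x # B')"
proof -
  have A: "set A \<subseteq> carrier G" and A': "set A' \<subseteq> carrier G"
    using assms(2) assms(2)[unfolded assms(3)] by auto
  have "braid_equiv G (x # inv x # A @ B) (A @ x # inv x # B)"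
    using braid_equiv_append[OF braid_equiv_pair_pass_list[OF assms(1) A], of "[]" B] by simp
  then have "braid_equiv G (A @ x # inv x # B) (x # inv x # A @ B)"
    by (rule braid_equiv_sym) (use assms in auto)
  also have "\<dots> = x # inv x # A' @ B'"
    using assms(3) by simp
  also have "braid_equiv G \<dots> (A' @ x # inv x # B')"
    using braid_equiv_append[OF braid_equiv_pair_pass_list[OF assms(1) A'], of "[]" B'] by simp
  finally show ?thesis .
qed

lemma braid_equiv_pair_conj_member:
  assumes "set (A @ B) \<subseteq> carrier G" "y \<in> set (A @ B)" "u \<in> carrier G"
  shows "braid_equiv G (A @ [y \<otimes> u \<otimes> inv y, inv (y \<otimes> u \<otimes> inv y)] @ B) (A @ [u, inv u] @ B)"
proof -
  obtain C D where CD: "A @ B = C @ y # D"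
    using assms(2) by (meson split_list)
  have y: "y \<in> carrier G" using assms(1,2) by auto
  define v where "v = y \<otimes> u \<otimes> inv y"
  have v: "v \<in> carrier G" using y assms(3) by (simp add: v_def)
  have "braid_equiv G (A @ v # inv v # B) ((C @ [y]) @ v # inv v # D)"
    using v assms(1) CD by (intro braid_equiv_pair_relocate) auto
  also have "\<dots> = C @ [y, v, inv v] @ D"
    by simp
  also have "braid_equiv G \<dots> (C @ [y, u, inv u] @ D)"
    unfolding v_def using y assms(3) by (intro braid_equiv_append braid_equiv_pair_conj_adjacent)
  also have "\<dots> = (C @ [y]) @ u # inv u # D"
    by simp
  also have "braid_equiv G \<dots> (A @ u # inv u # B)"
    using assms CD by (intro braid_equiv_pair_relocate) auto
  finally show ?thesis by (simp add: v_def)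
qed

definition pair_conjugators :: "'a list \<Rightarrow> 'a list \<Rightarrow> 'a set" where
  "pair_conjugators A B = {h \<in> carrier G. \<forall>x \<in> carrier G.
     braid_equiv G (A @ [h \<otimes> x \<otimes> inv h, inv (h \<otimes> x \<otimes> inv h)] @ B) (A @ [x, inv x] @ B)}"

lemma pair_conjugatorsD:
  assumes "h \<in> pair_conjugators A B"
  shows "h \<in> carrier G"
    and "x \<in> carrier G \<Longrightarrow>
      braid_equiv G (A @ [h \<otimes> x \<otimes> inv h, inv (h \<otimes> x \<otimes> inv h)] @ B) (A @ [x, inv x] @ B)"
  using assms unfolding pair_conjugators_def by blast+

lemma subgroup_pair_conjugators:
  assumes "set (A @ B) \<subseteq> carrier G"
  shows "subgroup (pair_conjugators A B) G"
proof
  show "pair_conjugators A B \<subseteq> carrier G"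
    using pair_conjugatorsD(1) by blast
  show "\<one> \<in> pair_conjugators A B"
    unfolding pair_conjugators_def braid_equiv_def by simp
next
  fix g h assume g: "g \<in> pair_conjugators A B" and h: "h \<in> pair_conjugators A B"
  note gh = pair_conjugatorsD(1)[OF g] pair_conjugatorsD(1)[OF h]
  have "braid_equiv G (A @ [g \<otimes> h \<otimes> x \<otimes> inv (g \<otimes> h), inv (g \<otimes> h \<otimes> x \<otimes> inv (g \<otimes> h))] @ B)
      (A @ [x, inv x] @ B)" if x: "x \<in> carrier G" for x
  proof -
    have conj_mult: "g \<otimes> h \<otimes> x \<otimes> inv (g \<otimes> h) = g \<otimes> (h \<otimes> x \<otimes> inv h) \<otimes> inv g"
      using gh x by (simp add: m_assoc inv_mult_group)
    have "braid_equiv G (A @ [g \<otimes> (h \<otimes> x \<otimes> inv h) \<otimes> inv g, inv (g \<otimes> (h \<otimes> x \<otimes> inv h) \<otimes> inv g)] @ B)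
        (A @ [h \<otimes> x \<otimes> inv h, inv (h \<otimes> x \<otimes> inv h)] @ B)"
      using gh x by (intro pair_conjugatorsD(2)[OF g]) simp
    also have "braid_equiv G \<dots> (A @ [x, inv x] @ B)"
      using x by (rule pair_conjugatorsD(2)[OF h])
    finally show ?thesis
      unfolding conj_mult .
  qed
  with gh show "g \<otimes> h \<in> pair_conjugators A B"
    unfolding pair_conjugators_def by blast
next
  fix h assume h: "h \<in> pair_conjugators A B"
  note h_carrier = pair_conjugatorsD(1)[OF h]
  have "braid_equiv G (A @ [inv h \<otimes> x \<otimes> inv (inv h), inv (inv h \<otimes> x \<otimes> inv (inv h))] @ B)
      (A @ [x, inv x] @ B)" if x: "x \<in> carrier G" for x
  proof -
    define x' where "x' = inv h \<otimes> x \<otimes> h"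
    have x': "x' \<in> carrier G" and "h \<otimes> x' \<otimes> inv h = x"
      using h_carrier x by (simp_all add: x'_def m_assoc)
    then have "braid_equiv G (A @ [x, inv x] @ B) (A @ [x', inv x'] @ B)"
      using pair_conjugatorsD(2)[OF h x'] by simp
    then have "braid_equiv G (A @ [x', inv x'] @ B) (A @ [x, inv x] @ B)"
      by (rule braid_equiv_sym) (use assms x in auto)
    then show ?thesis
      using h_carrier by (simp add: x'_def)
  qed
  with h_carrier show "inv h \<in> pair_conjugators A B"
    unfolding pair_conjugators_def by simp
qed

lemma generators_in_pair_conjugators:
  assumes "set (A @ B) \<subseteq> carrier G"
  shows "set (A @ B) \<subseteq> pair_conjugators A B"
  using assms braid_equiv_pair_conj_member[OF assms] by (auto simp: pair_conjugators_def)

lemma braid_equiv_pair_conj_generate: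
  assumes "set (A @ B) \<subseteq> carrier G" "p \<in> carrier G" "h \<in> generate G (set (A @ B))"
  shows "braid_equiv G (A @ [h \<otimes> p \<otimes> inv h, h \<otimes> inv p \<otimes> inv h] @ B) (A @ [p, inv p] @ B)"
proof -
  have h: "h \<in> pair_conjugators A B"
    using assms(3) generate_subgroup_incl[OF generators_in_pair_conjugators subgroup_pair_conjugators]
      assms(1) by blast
  moreover have "h \<otimes> inv p \<otimes> inv h = inv (h \<otimes> p \<otimes> inv h)"
    using pair_conjugatorsD(1)[OF h] assms(2) by (simp add: m_assoc inv_mult_group)
  ultimately show ?thesis
    using pair_conjugatorsD(2)[OF h assms(2)] by simp
qed

end

theorem lemma1p9:
  fixes G :: "('a, 'b) monoid_scheme" and ts :: "'a list" and k :: nat and h :: 'a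
  assumes "group G"
    and "set ts \<subseteq> carrier G"
    and "Suc k < length ts"
    and "ts ! (Suc k) = inv\<^bsub>G\<^esub> (ts ! k)"
    and "h \<in> generate G (set (take k ts @ drop (Suc (Suc k)) ts))"
  shows "braid_equiv G
           (ts[k := h \<otimes>\<^bsub>G\<^esub> ts!k \<otimes>\<^bsub>G\<^esub> inv\<^bsub>G\<^esub> h,
               Suc k := h \<otimes>\<^bsub>G\<^esub> ts!(Suc k) \<otimes>\<^bsub>G\<^esub> inv\<^bsub>G\<^esub> h])
           ts"
proof -
  interpret group G by fact
  define A B p where "A = take k ts" and "B = drop (Suc (Suc k)) ts" and "p = ts ! k"
  have ts: "ts = A @ [p, inv\<^bsub>G\<^esub> p] @ B"
    using id_take_nth_nth_drop[OF assms(3)] assms(4) unfolding A_def B_def p_def by simp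
  have "set (A @ B) \<subseteq> carrier G" "p \<in> carrier G"
    using assms(2) unfolding ts by auto
  moreover have "h \<in> generate G (set (A @ B))"
    using assms(5) unfolding A_def B_def .
  ultimately have "braid_equiv G
      (A @ [h \<otimes>\<^bsub>G\<^esub> p \<otimes>\<^bsub>G\<^esub> inv\<^bsub>G\<^esub> h, h \<otimes>\<^bsub>G\<^esub> inv\<^bsub>G\<^esub> p \<otimes>\<^bsub>G\<^esub> inv\<^bsub>G\<^esub> h] @ B) ts"
    unfolding ts by (rule braid_equiv_pair_conj_generate)
  moreover have "ts[k := x, Suc k := y] = A @ [x, y] @ B" for x y
    by (subst ts) (use assms(3) in \<open>simp add: A_def list_update_append\<close>)
  ultimately show ?thesis
    using assms(4) by (simp add: p_def)
qed

end
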